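(* Let $\Bbbk$ be a field of characteristic zero, let $d\ge 2$ be an integer, and let $A$ be a vector space over $\Bbbk$ (of arbitrary, possibly infinite, dimension) equipped with a symmetric $d$-linear map $\mu: A^d\to A$. If $A$ is Yagzhev nil, then $A$ is Engel. More precisely, if $A$ is Yagzhev nil of nilindex $p$, then $A$ is $n$-Engel for $$n = d\left\lfloor \frac{p-2}{d-1}\right\rfloor + 1.$$
   Context: The map $\mu$ is symmetric: $\mu(x_1,\dots,x_d)=\mu(x_{\sigma(1)},\dots,x_{\sigma(d)})$ for all $\sigma\in S_d$ and all $x_i\in A$. For $x,y\in A$ define $\mathrm{ad}_x(y)=\mu(x,\dots,x,y)$ (with $d-1$ copies of $x$), $\mathrm{ad}_x^1=\mathrm{ad}_x$, and $\mathrm{ad}_x^{k+1}(y)=\mu(x,\dots,x,\mathrm{ad}_x^k(y))$. The algebra $(A,\mu)$ is called $n$-Engel if $\mathrm{ad}_x^n(y)=0$ for all $x,y\in A$, and Engel if it is $n$-Engel for some positive integer $n$. Define maps $T_q:A\to A$ for positive integers $q$ recursively by $T_1(x)=x$ and, for $q>1$, $T_q(x)=\sum \mu(T_{i_1}(x),\dots,T_{i_d}(x))$, where the sum runs over all $d$-tuples $(i_1,\dots,i_d)$ of positive integers with $i_1+\dots+i_d=q$. The algebra $A$ is called Yagzhev nil of nilindex $p$ (for a positive integer $p$) if $T_q(x)=0$ for all $x\in A$ and all integers $q\ge p$; it is called Yagzhev nil if it is Yagzhev nil of nilindex $p$ for some $p$. *)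

theory Defs
  imports Complex_Main "HOL-Combinatorics.Permutations"
begin

text \<open>A d-ary operation on A is modelled as a function on lists; only lists of
length d are relevant.\<close>

definition symmetric_multilinear ::
  "('k::field \<Rightarrow> 'a::ab_group_add \<Rightarrow> 'a) \<Rightarrow> nat \<Rightarrow> ('a list \<Rightarrow> 'a) \<Rightarrow> bool" where
  "symmetric_multilinear scale d \<mu> \<longleftrightarrow>
     (\<forall>xs. length xs = d \<longrightarrow> (\<forall>i<d. Vector_Spaces.linear scale scale (\<lambda>v. \<mu> (xs[i := v])))) \<and>
     (\<forall>xs \<sigma>. length xs = d \<longrightarrow> \<sigma> permutes {..<d} \<longrightarrow>
        \<mu> (map (\<lambda>i. xs ! \<sigma> i) [0..<d]) = \<mu> xs)"

definition ad :: "('a list \<Rightarrow> 'a) \<Rightarrow> nat \<Rightarrow> 'a \<Rightarrow> 'a \<Rightarrow> 'a" where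
  "ad \<mu> d x y = \<mu> (replicate (d - 1) x @ [y])"

definition n_engel :: "('a::zero list \<Rightarrow> 'a) \<Rightarrow> nat \<Rightarrow> nat \<Rightarrow> bool" where
  "n_engel \<mu> d n \<longleftrightarrow> (\<forall>x y. (ad \<mu> d x ^^ n) y = 0)"

definition engel :: "('a::zero list \<Rightarrow> 'a) \<Rightarrow> nat \<Rightarrow> bool" where
  "engel \<mu> d \<longleftrightarrow> (\<exists>n>0. n_engel \<mu> d n)"

text \<open>T_q(x); entries of the tuples are restricted to be < q, which is automatic
when d \<ge> 2 (and makes the recursion well-founded). T_0 is an unused dummy.\<close>
function Tmap :: "('a::comm_monoid_add list \<Rightarrow> 'a) \<Rightarrow> nat \<Rightarrow> nat \<Rightarrow> 'a \<Rightarrow> 'a" where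
  "Tmap \<mu> d q x =
    (if q = 0 then 0 else if q = 1 then x else
     (\<Sum>is \<in> {is. length is = d \<and> (\<forall>i\<in>set is. 0 < i \<and> i < q) \<and> sum_list is = q}.
        \<mu> (map (\<lambda>i. Tmap \<mu> d i x) is)))"
  by pat_completeness auto
termination by (relation "measure (\<lambda>(\<mu>, d, q, x). q)") auto

definition yagzhev_nil_of_nilindex :: "('a::comm_monoid_add list \<Rightarrow> 'a) \<Rightarrow> nat \<Rightarrow> nat \<Rightarrow> bool" where
  "yagzhev_nil_of_nilindex \<mu> d p \<longleftrightarrow> 0 < p \<and> (\<forall>x q. p \<le> q \<longrightarrow> Tmap \<mu> d q x = 0)"

definition yagzhev_nil :: "('a::comm_monoid_add list \<Rightarrow> 'a) \<Rightarrow> nat \<Rightarrow> bool" where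
  "yagzhev_nil \<mu> d \<longleftrightarrow> (\<exists>p. yagzhev_nil_of_nilindex \<mu> d p)"

end

(*
  Adjoin an indeterminate t and extend mu multilinearly to A[t]. Evaluating polynomials at
  scalars commutes with the maps T_q, and in characteristic zero a polynomial vanishing at all
  nonzero scalars is zero; so the nil property passes to A[t], and W = sum_{q<p} T_q(U) solves
  W = U + mu(W, ..., W) for every polynomial U.
  Take U = x t - mu(x, ..., x) t^d + y t^M with M large. Comparing coefficients, W = x t below
  degree M, and the coefficient of t^(M + i(d-1)) is d^i ad_x^i(y). On the other hand T_q(U)
  only has monomials of degree a + d b + M c with a + b + c = q and q = 1 mod (d - 1), and for
  q < p the degree M + K(d-1) with K = d floor((p-2)/(d-1)) + 1 is not of this form. Hence
  d^K ad_x^K(y) = 0.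
*)

theory Submission
  imports Defs "HOL-Library.Function_Algebras"
begin

lemma sum_fun_apply: "(\<Sum>i\<in>I. f i) x = (\<Sum>i\<in>I. f i x)"
  by (induct I rule: infinite_finite_induct) auto

definition multilinear :: "('k::field \<Rightarrow> 'a::ab_group_add \<Rightarrow> 'a) \<Rightarrow> nat \<Rightarrow> ('a list \<Rightarrow> 'a) \<Rightarrow> bool" where
  "multilinear scale r g \<longleftrightarrow>
     (\<forall>xs. length xs = r \<longrightarrow> (\<forall>i<r. module_hom scale scale (\<lambda>v. g (xs[i := v]))))"

lemma multilinear_if_symmetric_multilinear:
  "symmetric_multilinear scale d \<mu> \<Longrightarrow> multilinear scale d \<mu>"
  unfolding symmetric_multilinear_def multilinear_def module_hom_iff_linear by blast

lemma multilinear_Cons: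
  fixes g :: "'a::ab_group_add list \<Rightarrow> 'a"
  assumes "multilinear scale (Suc r) g"
  shows "multilinear scale r (\<lambda>xs. g (a # xs))"
  unfolding multilinear_def
proof (intro allI impI)
  fix xs :: "'a list" and i assume "length xs = r" "i < r"
  then have "module_hom scale scale (\<lambda>v. g ((a # xs)[Suc i := v]))"
    using assms[unfolded multilinear_def, rule_format, of "a # xs" "Suc i"] by simp
  then show "module_hom scale scale (\<lambda>v. g (a # xs[i := v]))" by simp
qed

lemma multilinear_hd:
  assumes "multilinear scale (Suc r) g" "length xs = r"
  shows "module_hom scale scale (\<lambda>v. g (v # xs))"
proof -
  have "\<forall>i<Suc r. module_hom scale scale (\<lambda>v. g ((0 # xs)[i := v]))"
    using assms unfolding multilinear_def by (metis length_Cons)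
  from this[rule_format, of 0] show ?thesis by simp
qed

lemma multilinear_eq_0:
  assumes "multilinear scale r g" "length xs = r" "0 \<in> set xs"
  shows "g xs = 0"
proof -
  obtain k where k: "k < r" "xs ! k = 0" using assms(2,3) by (metis in_set_conv_nth)
  then have "module_hom scale scale (\<lambda>v. g (xs[k := v]))"
    using assms(1,2) unfolding multilinear_def by blast
  then have "g (xs[k := 0]) = 0" using module_hom.zero by fastforce
  with k show ?thesis by (metis list_update_id)
qed

lemma symmetric_multilinear_update_replicate:
  assumes sm: "symmetric_multilinear scale d \<mu>" and k: "k < d"
  shows "\<mu> ((replicate d x)[k := z]) = ad \<mu> d x z"
proof -
  define xs where "xs = (replicate d x)[k := z]"
  define \<sigma> where "\<sigma> = Transposition.transpose k (d - 1)"
  have perm: "\<sigma> permutes {..<d}" unfolding \<sigma>_def using k by (intro permutes_swap_id) auto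
  have "\<mu> (map (\<lambda>i. xs ! \<sigma> i) [0..<d]) = \<mu> xs"
    using sm perm unfolding symmetric_multilinear_def xs_def by simp
  moreover have "map (\<lambda>i. xs ! \<sigma> i) [0..<d] = replicate (d - 1) x @ [z]"
    using k by (intro nth_equalityI)
      (auto simp: xs_def \<sigma>_def nth_append transpose_def nth_list_update)
  ultimately show ?thesis unfolding xs_def ad_def by simp
qed

lemma ad_scale:
  assumes "symmetric_multilinear scale d \<mu>" "1 \<le> d"
  shows "ad \<mu> d x (scale c z) = scale c (ad \<mu> d x z)"
proof -
  have "module_hom scale scale (\<lambda>v. \<mu> ((replicate (d - 1) x @ [z])[d - 1 := v]))"
    using multilinear_if_symmetric_multilinear[OF assms(1)] assms(2)
    unfolding multilinear_def by simp
  then have "module_hom scale scale (\<lambda>v. \<mu> (replicate (d - 1) x @ [v]))"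
    by (simp add: list_update_append)
  then show ?thesis unfolding ad_def by (rule module_hom.scale)
qed

lemma n_engel_Suc: "n_engel \<mu> d n \<Longrightarrow> n_engel \<mu> d (Suc n)"
  unfolding n_engel_def funpow_Suc_right comp_def by blast

definition weak_compositions :: "nat \<Rightarrow> nat \<Rightarrow> nat list set" where
  "weak_compositions r n = {js. length js = r \<and> sum_list js = n}"

definition compositions :: "nat \<Rightarrow> nat \<Rightarrow> nat list set" where
  "compositions r n = {js \<in> weak_compositions r n. 0 \<notin> set js}"

lemma finite_weak_compositions: "finite (weak_compositions r n)"
proof -
  have "weak_compositions r n \<subseteq> {js. set js \<subseteq> {..n} \<and> length js = r}"
    unfolding weak_compositions_def using member_le_sum_list by fastforce
  then show ?thesis using finite_lists_length_eq[of "{..n}" r] finite_subset by auto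
qed

lemma weak_compositions_Suc:
  "weak_compositions (Suc r) n = (\<lambda>(i, js). i # js) ` (SIGMA i:{..n}. weak_compositions r (n - i))"
proof (intro set_eqI iffI)
  fix js assume "js \<in> weak_compositions (Suc r) n"
  then obtain i js' where "js = i # js'" "length js' = r" "i + sum_list js' = n"
    unfolding weak_compositions_def by (cases js) auto
  then show "js \<in> (\<lambda>(i, js). i # js) ` (SIGMA i:{..n}. weak_compositions r (n - i))"
    unfolding weak_compositions_def by force
qed (auto simp: weak_compositions_def)

lemma length_le_sum_list: "0 \<notin> set js \<Longrightarrow> length js \<le> sum_list (js :: nat list)"
  by (induct js) (auto simp: Suc_le_eq)

lemma nth_plus_length_le_sum_list:
  assumes "0 \<notin> set js" "k < length js"
  shows "js ! k + (length js - 1) \<le> sum_list (js :: nat list)"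
proof -
  have m: "js ! k \<in> set js" using assms(2) by simp
  have "sum_list js = js ! k + sum_list (remove1 (js ! k) js)"
    using sum_list_map_remove1[OF m, of id] by simp
  moreover have "length (remove1 (js ! k) js) \<le> sum_list (remove1 (js ! k) js)"
    using assms(1) by (meson length_le_sum_list notin_set_remove1)
  ultimately show ?thesis using m by (simp add: length_remove1)
qed

lemma compositions_member_less:
  assumes "js \<in> compositions r n" "2 \<le> r" "i \<in> set js"
  shows "0 < i \<and> i < n"
proof -
  have js: "length js = r" "sum_list js = n" "0 \<notin> set js"
    using assms(1) unfolding compositions_def weak_compositions_def by auto
  obtain k where "k < r" "i = js ! k" using assms(3) js(1) by (metis in_set_conv_nth)
  then have "i + (r - 1) \<le> n" using nth_plus_length_le_sum_list[OF js(3)] js by simp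
  then show ?thesis using assms(2,3) js(3) by (cases i) auto
qed

lemma compositions_empty: "n < r \<Longrightarrow> compositions r n = {}"
  unfolding compositions_def weak_compositions_def using length_le_sum_list by fastforce

section \<open>Polynomials with coefficients in \<open>A\<close>\<close>

text \<open>A sequence \<open>P :: nat \<Rightarrow> 'a\<close> is the coefficient sequence of a polynomial in an
indeterminate \<open>t\<close> over \<open>A\<close>; \<open>cauchy_map g Ps\<close> is the coefficient sequence of
\<open>g(P\<^sub>1, \<dots>, P\<^sub>r)\<close> for the multilinear extension of \<open>g\<close> to \<open>A[t]\<close>.\<close>

fun cauchy_map :: "('a list \<Rightarrow> 'a) \<Rightarrow> (nat \<Rightarrow> 'a) list \<Rightarrow> nat \<Rightarrow> 'a::comm_monoid_add" where
  "cauchy_map g [] n = (if n = 0 then g [] else 0)"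
| "cauchy_map g (P # Ps) n = (\<Sum>i\<le>n. cauchy_map (\<lambda>xs. g (P i # xs)) Ps (n - i))"

definition vanishes_above :: "nat \<Rightarrow> (nat \<Rightarrow> 'a::zero) \<Rightarrow> bool" where
  "vanishes_above B P \<longleftrightarrow> (\<forall>n>B. P n = 0)"

definition poly_eval :: "('k::field \<Rightarrow> 'a \<Rightarrow> 'a) \<Rightarrow> 'k \<Rightarrow> nat \<Rightarrow> (nat \<Rightarrow> 'a) \<Rightarrow> 'a::comm_monoid_add" where
  "poly_eval scale c N P = (\<Sum>n\<le>N. scale (c ^ n) (P n))"

lemma cauchy_map_eq_sum_weak_compositions:
  "cauchy_map g Ps n =
     (\<Sum>js\<in>weak_compositions (length Ps) n. g (map (\<lambda>k. (Ps ! k) (js ! k)) [0..<length Ps]))"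
proof (induct Ps arbitrary: g n)
  case Nil
  have "weak_compositions 0 n = (if n = 0 then {[]} else {})"
    unfolding weak_compositions_def by auto
  then show ?case by simp
next
  case (Cons P Ps)
  let ?W = "SIGMA i:{..n}. weak_compositions (length Ps) (n - i)"
  have inj: "inj_on (\<lambda>(i, js). i # js) ?W" by (auto simp: inj_on_def)
  have "(\<Sum>js\<in>weak_compositions (length (P # Ps)) n.
          g (map (\<lambda>k. ((P # Ps) ! k) (js ! k)) [0..<length (P # Ps)]))
      = (\<Sum>(i, js)\<in>?W. g (map (\<lambda>k. ((P # Ps) ! k) ((i # js) ! k)) [0..<Suc (length Ps)]))"
    unfolding length_Cons weak_compositions_Suc sum.reindex[OF inj]
    by (simp add: case_prod_unfold del: upt_Suc)
  also have "\<dots> = (\<Sum>(i, js)\<in>?W. g (P i # map (\<lambda>k. (Ps ! k) (js ! k)) [0..<length Ps]))"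
    by (rule sum.cong) (auto simp: upt_conv_Cons map_Suc_upt[symmetric] comp_def simp del: upt_Suc)
  also have "\<dots> = (\<Sum>i\<le>n. \<Sum>js\<in>weak_compositions (length Ps) (n - i).
                    g (P i # map (\<lambda>k. (Ps ! k) (js ! k)) [0..<length Ps]))"
    by (subst sum.Sigma) (auto simp: finite_weak_compositions)
  finally show ?case by (simp add: Cons)
qed

lemma cauchy_map_replicate:
  "cauchy_map g (replicate r P) n = (\<Sum>js\<in>weak_compositions r n. g (map P js))"
  unfolding cauchy_map_eq_sum_weak_compositions
  by (intro sum.cong refl arg_cong[where f = g] nth_equalityI) (auto simp: weak_compositions_def)

lemma cauchy_map_nonzero_imp:
  assumes "multilinear scale (length Ps) g" "cauchy_map g Ps n \<noteq> 0"
  obtains js where "js \<in> weak_compositions (length Ps) n" "\<And>k. k < length Ps \<Longrightarrow> (Ps ! k) (js ! k) \<noteq> 0"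
proof -
  from assms(2) obtain js where js: "js \<in> weak_compositions (length Ps) n"
    and nz: "g (map (\<lambda>k. (Ps ! k) (js ! k)) [0..<length Ps]) \<noteq> 0"
    unfolding cauchy_map_eq_sum_weak_compositions by (meson sum.not_neutral_contains_not_neutral)
  have "(Ps ! k) (js ! k) \<noteq> 0" if "k < length Ps" for k
    using multilinear_eq_0[OF assms(1)] nz that by force
  with js that show ?thesis by blast
qed

lemma cauchy_map_eq_0:
  "(\<And>xs. length xs = length Ps \<Longrightarrow> g xs = 0) \<Longrightarrow> cauchy_map g Ps n = 0"
  by (induct Ps arbitrary: g n) auto

lemma vanishes_above_mono: "vanishes_above B P \<Longrightarrow> B \<le> B' \<Longrightarrow> vanishes_above B' P"
  unfolding vanishes_above_def by simp

lemma vanishes_above_sum: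
  "(\<And>i. i \<in> I \<Longrightarrow> vanishes_above B (P i)) \<Longrightarrow> vanishes_above B (\<Sum>i\<in>I. P i)"
  unfolding vanishes_above_def sum_fun_apply by simp

lemma vanishes_above_cauchy_map:
  assumes "multilinear scale (length Ps) g" "\<And>k. k < length Ps \<Longrightarrow> vanishes_above (B k) (Ps ! k)"
  shows "vanishes_above (\<Sum>k<length Ps. B k) (cauchy_map g Ps)"
  unfolding vanishes_above_def
proof (intro allI impI; rule ccontr)
  fix n assume n: "(\<Sum>k<length Ps. B k) < n" "cauchy_map g Ps n \<noteq> 0"
  then obtain js where js: "js \<in> weak_compositions (length Ps) n"
    and nz: "\<And>k. k < length Ps \<Longrightarrow> (Ps ! k) (js ! k) \<noteq> 0"
    using cauchy_map_nonzero_imp[OF assms(1)] by blast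
  have "js ! k \<le> B k" if "k < length Ps" for k
    using assms(2)[OF that] nz[OF that] not_le unfolding vanishes_above_def by blast
  then have "(\<Sum>k<length Ps. js ! k) \<le> (\<Sum>k<length Ps. B k)" by (intro sum_mono) simp
  moreover have "(\<Sum>k<length Ps. js ! k) = n"
    using js by (auto simp: weak_compositions_def sum_list_sum_nth atLeast0LessThan)
  ultimately show False using n by simp
qed

lemma poly_eval_eq_if_vanishes_above:
  assumes "vector_space scale" "vanishes_above B P" "B \<le> N"
  shows "poly_eval scale c N P = poly_eval scale c B P"
proof -
  interpret vector_space scale by fact
  show ?thesis
    unfolding poly_eval_def using assms(2,3)
    by (intro sum.mono_neutral_cong_right) (auto simp: vanishes_above_def)
qed

lemma poly_eval_add:
  assumes "vector_space scale"
  shows "poly_eval scale c N (P + Q) = poly_eval scale c N P + poly_eval scale c N Q"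
proof -
  interpret vector_space scale by fact
  show ?thesis unfolding poly_eval_def by (simp add: scale_right_distrib sum.distrib)
qed

lemma poly_eval_diff:
  assumes "vector_space scale"
  shows "poly_eval scale c N (P - Q) = poly_eval scale c N P - poly_eval scale c N Q"
proof -
  interpret vector_space scale by fact
  show ?thesis unfolding poly_eval_def by (simp add: scale_right_diff_distrib sum_subtractf)
qed

lemma poly_eval_sum:
  assumes "vector_space scale"
  shows "poly_eval scale c N (\<Sum>i\<in>I. P i) = (\<Sum>i\<in>I. poly_eval scale c N (P i))"
proof -
  interpret vector_space scale by fact
  show ?thesis unfolding poly_eval_def sum_fun_apply scale_sum_right by (rule sum.swap)
qed

lemma sum_atMost_triangle:
  fixes N :: nat
  shows "(\<Sum>n\<le>N. \<Sum>i\<le>n. F i (n - i)) = (\<Sum>i\<le>N. \<Sum>j\<le>N - i. (F i j :: 'a::comm_monoid_add))"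
proof -
  have "(\<Sum>n\<le>N. \<Sum>i\<le>n. F i (n - i)) = (\<Sum>(i, j)\<in>{(i, j). i + j \<le> N}. F i j)"
    by (rule sum.triangle_reindex_eq[symmetric])
  also have "{(i, j). i + j \<le> N} = (SIGMA i:{..N}. {..N - i})" by auto
  finally show ?thesis by (simp add: sum.Sigma)
qed

lemma poly_eval_cauchy_map_Cons:
  assumes "vector_space scale"
  shows "poly_eval scale c N (cauchy_map g (P # Ps)) =
    (\<Sum>i\<le>N. scale (c ^ i) (poly_eval scale c (N - i) (cauchy_map (\<lambda>xs. g (P i # xs)) Ps)))"
proof -
  interpret vector_space scale by fact
  have "poly_eval scale c N (cauchy_map g (P # Ps)) =
      (\<Sum>n\<le>N. \<Sum>i\<le>n. scale (c ^ i) (scale (c ^ (n - i)) (cauchy_map (\<lambda>xs. g (P i # xs)) Ps (n - i))))"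
    unfolding poly_eval_def cauchy_map.simps scale_sum_right
    by (intro sum.cong refl) (simp add: power_add[symmetric])
  also have "\<dots> = (\<Sum>i\<le>N. \<Sum>j\<le>N - i. scale (c ^ i) (scale (c ^ j) (cauchy_map (\<lambda>xs. g (P i # xs)) Ps j)))"
    by (rule sum_atMost_triangle)
  finally show ?thesis unfolding poly_eval_def scale_sum_right .
qed

lemma poly_eval_cauchy_map:
  assumes vs: "vector_space scale"
  shows "multilinear scale (length Ps) g \<Longrightarrow> \<forall>P\<in>set Ps. vanishes_above B P \<Longrightarrow> B * length Ps \<le> N \<Longrightarrow>
     poly_eval scale c N (cauchy_map g Ps) = g (map (poly_eval scale c N) Ps)"
proof (induct Ps arbitrary: g N)
  case Nil
  interpret vector_space scale by (rule vs)
  have "poly_eval scale c N (cauchy_map g []) = (\<Sum>n\<le>N. if n = 0 then g [] else 0)"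
    unfolding poly_eval_def by (rule sum.cong) auto
  then show ?case by (simp del: cauchy_map.simps)
next
  case (Cons P Ps)
  interpret vector_space scale by (rule vs)
  let ?r = "map (poly_eval scale c N) Ps"
  have hd: "module_hom scale scale (\<lambda>v. g (v # ?r))"
    using Cons.prems(1) by (intro multilinear_hd) simp_all
  have step: "poly_eval scale c (N - i) (cauchy_map (\<lambda>xs. g (P i # xs)) Ps) = g (P i # ?r)"
    if "i \<le> N" for i
  proof (cases "i \<le> B")
    case True
    then have le: "B * length Ps \<le> N - i" using Cons.prems(3) by (simp add: algebra_simps)
    have r: "map (poly_eval scale c (N - i)) Ps = ?r"
    proof (rule map_cong[OF refl])
      fix Q assume "Q \<in> set Ps"
      moreover from this have "B \<le> N - i" using le by (cases Ps) auto
      ultimately show "poly_eval scale c (N - i) Q = poly_eval scale c N Q"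
        using poly_eval_eq_if_vanishes_above[OF vs] Cons.prems(2)
        by (metis diff_le_self le_trans list.set_intros(2))
    qed
    have "poly_eval scale c (N - i) (cauchy_map (\<lambda>xs. g (P i # xs)) Ps) =
        g (P i # map (poly_eval scale c (N - i)) Ps)"
      using Cons.hyps[OF multilinear_Cons[OF Cons.prems(1)[simplified]] _ le] Cons.prems(2) by simp
    then show ?thesis unfolding r .
  next
    case False
    then have "P i = 0" using Cons.prems(2) unfolding vanishes_above_def by auto
    then have "g (P i # xs) = 0" if "length xs = length Ps" for xs
      using module_hom.zero[OF multilinear_hd[OF _ that]] Cons.prems(1) by simp
    then show ?thesis by (simp add: cauchy_map_eq_0 poly_eval_def)
  qed
  have "poly_eval scale c N (cauchy_map g (P # Ps)) = (\<Sum>i\<le>N. scale (c ^ i) (g (P i # ?r)))"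
    unfolding poly_eval_cauchy_map_Cons[OF vs] using step by simp
  also have "\<dots> = g (poly_eval scale c N P # ?r)"
    unfolding poly_eval_def[of scale c N P] module_hom.sum[OF hd] module_hom.scale[OF hd] ..
  finally show ?case by (simp del: cauchy_map.simps)
qed

text \<open>Replacing \<open>c\<close> by \<open>2 c\<close> and subtracting \<open>2\<^sup>N\<^sup>+\<^sup>1\<close> times the original identity kills
the top coefficient; characteristic zero makes \<open>2\<^sup>n - 2\<^sup>N\<^sup>+\<^sup>1\<close> invertible for \<open>n \<le> N\<close>.\<close>

lemma poly_coeff_eq_0_if_roots:
  fixes scale :: "'k::field_char_0 \<Rightarrow> 'a::ab_group_add \<Rightarrow> 'a"
  assumes vs: "vector_space scale"
  shows "(\<And>c. c \<noteq> 0 \<Longrightarrow> (\<Sum>n\<le>N. scale (c ^ n) (P n)) = 0) \<Longrightarrow> n \<le> N \<Longrightarrow> P n = 0"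
proof (induct N arbitrary: P n)
  case 0
  interpret vector_space scale by (rule vs)
  show ?case using "0.prems"(1)[of 1] "0.prems"(2) by simp
next
  case (Suc N)
  interpret vector_space scale by (rule vs)
  define f where "f c = (\<Sum>n\<le>Suc N. scale (c ^ n) (P n))" for c :: 'k
  define P' where "P' n = scale ((2::'k) ^ n - 2 ^ Suc N) (P n)" for n
  have "f (2 * c) - scale (2 ^ Suc N) (f c) = (\<Sum>n\<le>Suc N. scale (c ^ n * (2 ^ n - 2 ^ Suc N)) (P n))"
    for c
    unfolding f_def scale_sum_right sum_subtractf[symmetric]
    by (intro sum.cong refl) (simp add: algebra_simps power_mult_distrib)
  also have "\<dots> c = (\<Sum>n\<le>N. scale (c ^ n) (P' n))" for c
    by (simp add: P'_def)
  finally have P'_sum: "(\<Sum>n\<le>N. scale (c ^ n) (P' n)) = f (2 * c) - scale (2 ^ Suc N) (f c)" for c ..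
  have f0: "f c = 0" if "c \<noteq> 0" for c
    unfolding f_def by (rule Suc.prems(1)[OF that])
  have "(\<Sum>n\<le>N. scale (c ^ n) (P' n)) = 0" if "c \<noteq> 0" for c
    unfolding P'_sum using f0 that by simp
  then have P'0: "P' m = 0" if "m \<le> N" for m
    using Suc.hyps that by blast
  have "P m = 0" if "m \<le> N" for m
  proof -
    have "(2::nat) ^ m < 2 ^ Suc N" using that by (intro power_strict_increasing) auto
    then have "(of_nat (2 ^ m) :: 'k) \<noteq> of_nat (2 ^ Suc N)"
      unfolding of_nat_eq_iff by simp
    then have "(2::'k) ^ m \<noteq> 2 ^ Suc N" by simp
    then show ?thesis using P'0[OF that] by (simp add: P'_def)
  qed
  moreover have "P (Suc N) = 0"
    using Suc.prems(1)[of 1] calculation by simp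
  ultimately show ?case using Suc.prems(2) le_Suc_eq by blast
qed

lemma poly_eq_0_if_roots:
  fixes scale :: "'k::field_char_0 \<Rightarrow> 'a::ab_group_add \<Rightarrow> 'a"
  assumes "vector_space scale" "vanishes_above N P" "\<And>c. poly_eval scale c N P = 0"
  shows "P = 0"
proof
  fix n
  show "P n = 0 n"
    using poly_coeff_eq_0_if_roots[OF assms(1), where N = N and P = P and n = n] assms(2,3)
    unfolding poly_eval_def vanishes_above_def by (cases "n \<le> N") auto
qed

section \<open>The maps \<open>T\<^sub>q\<close>\<close>

declare Tmap.simps [simp del]

lemma Tmap_0 [simp]: "Tmap \<mu> d 0 x = 0"
  by (subst Tmap.simps) simp

lemma Tmap_1 [simp]: "Tmap \<mu> d (Suc 0) x = x"
  by (subst Tmap.simps) simp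

lemma Tmap_eq_sum_compositions:
  assumes "2 \<le> d" "2 \<le> q"
  shows "Tmap \<mu> d q x = (\<Sum>is\<in>compositions d q. \<mu> (map (\<lambda>i. Tmap \<mu> d i x) is))"
proof -
  have "{is. length is = d \<and> (\<forall>i\<in>set is. 0 < i \<and> i < q) \<and> sum_list is = q} = compositions d q"
    using compositions_member_less[OF _ assms(1), of _ q]
    by (auto simp: compositions_def weak_compositions_def)
  with assms(2) show ?thesis by (subst Tmap.simps) simp
qed

text \<open>The generating series \<open>\<Sum>\<^sub>q T\<^sub>q(x) t\<^sup>q\<close> solves \<open>Y = x t + \<mu>(Y, \<dots>, Y)\<close>.\<close>

lemma cauchy_map_replicate_Tmap:
  assumes "multilinear scale d \<mu>" "2 \<le> d"
  shows "cauchy_map \<mu> (replicate d (\<lambda>i. Tmap \<mu> d i x)) q = (if 2 \<le> q then Tmap \<mu> d q x else 0)"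
proof -
  let ?Y = "\<lambda>i. Tmap \<mu> d i x"
  have "\<mu> (map ?Y js) = 0" if "js \<in> weak_compositions d q - compositions d q" for js
  proof (rule multilinear_eq_0[OF assms(1)])
    show "length (map ?Y js) = d" using that by (simp add: weak_compositions_def)
    have "0 \<in> set js" using that by (simp add: compositions_def)
    then show "0 \<in> set (map ?Y js)" unfolding set_map by (rule rev_image_eqI) simp
  qed
  then have "cauchy_map \<mu> (replicate d ?Y) q = (\<Sum>js\<in>compositions d q. \<mu> (map ?Y js))"
    unfolding cauchy_map_replicate
    by (intro sum.mono_neutral_right finite_weak_compositions) (auto simp: compositions_def)
  also have "\<dots> = (if 2 \<le> q then Tmap \<mu> d q x else 0)"
  proof (cases "2 \<le> q")
    case True
    then show ?thesis by (simp add: Tmap_eq_sum_compositions[OF assms(2) True])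
  next
    case False
    then show ?thesis using compositions_empty[of q d] assms(2) by simp
  qed
  finally show ?thesis .
qed

lemma sum_Tmap_fixpoint:
  assumes vs: "vector_space scale" and d: "2 \<le> d" and ml: "multilinear scale d \<mu>" and "0 < p"
    and nil: "\<And>q. p \<le> q \<Longrightarrow> Tmap \<mu> d q x = 0"
  shows "(\<Sum>q<p. Tmap \<mu> d q x) = x + \<mu> (replicate d (\<Sum>q<p. Tmap \<mu> d q x))"
proof -
  interpret vector_space scale by (rule vs)
  define Y where "Y = (\<lambda>q. Tmap \<mu> d q x)"
  define N where "N = p * d"
  have N: "1 \<le> N" "p \<le> N" using \<open>0 < p\<close> d by (simp_all add: N_def Suc_le_eq)
  have Y_va: "vanishes_above p Y" using nil by (simp add: vanishes_above_def Y_def)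
  have Y_eval: "poly_eval scale 1 N Y = (\<Sum>q<p. Tmap \<mu> d q x)"
  proof -
    have "poly_eval scale 1 N Y = (\<Sum>q\<le>N. Y q)" by (simp add: poly_eval_def)
    also have "\<dots> = (\<Sum>q<p. Y q)"
      using nil N by (intro sum.mono_neutral_right) (auto simp: Y_def)
    finally show ?thesis by (simp add: Y_def)
  qed
  have "Y = (\<lambda>n. if n = 1 then x else 0) + cauchy_map \<mu> (replicate d Y)"
    by (auto simp: Y_def fun_eq_iff cauchy_map_replicate_Tmap[OF ml d] not_le less_2_cases_iff)
  then have "poly_eval scale 1 N Y
      = poly_eval scale 1 N (\<lambda>n. if n = 1 then x else 0) + poly_eval scale 1 N (cauchy_map \<mu> (replicate d Y))"
    by (metis poly_eval_add[OF vs])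
  also have "poly_eval scale 1 N (\<lambda>n. if n = 1 then x else 0) = x"
    using N by (simp add: poly_eval_def if_distrib[of "scale _"] cong: if_cong)
  also have "poly_eval scale 1 N (cauchy_map \<mu> (replicate d Y)) = \<mu> (replicate d (poly_eval scale 1 N Y))"
    using poly_eval_cauchy_map[OF vs, where Ps = "replicate d Y" and B = p] ml Y_va by (simp add: N_def)
  finally show ?thesis unfolding Y_eval .
qed

lemma vanishes_above_Tmap:
  assumes ml: "multilinear scale d \<mu>" and d: "2 \<le> d" and U: "vanishes_above B U"
  shows "vanishes_above (B * q) (Tmap (cauchy_map \<mu>) d q U)"
proof (induct q rule: less_induct)
  case (less q)
  consider "q = 0" | "q = 1" | "2 \<le> q" by linarith
  then show ?case
  proof cases
    case 3
    show ?thesis unfolding Tmap_eq_sum_compositions[OF d 3]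
    proof (rule vanishes_above_sum)
      fix "is" assume "is": "is \<in> compositions d q"
      then have len: "length is = d" and "sum_list is = q"
        by (auto simp: compositions_def weak_compositions_def)
      then have "(\<Sum>k<length is. is ! k) = q"
        by (auto simp: sum_list_sum_nth atLeast0LessThan)
      then have "(\<Sum>k<length is. B * is ! k) = B * q"
        by (simp add: sum_distrib_left[symmetric])
      moreover have "vanishes_above (\<Sum>k<length (map (\<lambda>i. Tmap (cauchy_map \<mu>) d i U) is). B * is ! k)
          (cauchy_map \<mu> (map (\<lambda>i. Tmap (cauchy_map \<mu>) d i U) is))"
        by (rule vanishes_above_cauchy_map)
          (use ml len compositions_member_less[OF "is" d] less.hyps in auto)
      ultimately show "vanishes_above (B * q) (cauchy_map \<mu> (map (\<lambda>i. Tmap (cauchy_map \<mu>) d i U) is))"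
        by simp
    qed
  qed (use U in \<open>auto simp: vanishes_above_def\<close>)
qed

lemma poly_eval_Tmap:
  assumes vs: "vector_space scale" and ml: "multilinear scale d \<mu>" and d: "2 \<le> d"
    and U: "vanishes_above B U"
  shows "B * q * d \<le> N \<Longrightarrow>
    poly_eval scale c N (Tmap (cauchy_map \<mu>) d q U) = Tmap \<mu> d q (poly_eval scale c N U)"
proof (induct q rule: less_induct)
  case (less q)
  interpret vector_space scale by (rule vs)
  let ?T = "\<lambda>i. Tmap (cauchy_map \<mu>) d i U"
  consider "q = 0" | "q = 1" | "2 \<le> q" by linarith
  then show ?case
  proof cases
    case 3
    have "poly_eval scale c N (cauchy_map \<mu> (map ?T is)) = \<mu> (map (\<lambda>i. Tmap \<mu> d i (poly_eval scale c N U)) is)"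
      if "is": "is \<in> compositions d q" for "is"
    proof -
      have len: "length is = d" using "is" by (simp add: compositions_def weak_compositions_def)
      have lt: "i < q" if "i \<in> set is" for i using compositions_member_less[OF "is" d that] by simp
      have "vanishes_above (B * q) (?T i)" if "i \<in> set is" for i
        using lt[OF that] by (intro vanishes_above_mono[OF vanishes_above_Tmap[OF ml d U]]) simp
      then have "\<forall>P\<in>set (map ?T is). vanishes_above (B * q) P" by simp
      then have "poly_eval scale c N (cauchy_map \<mu> (map ?T is)) = \<mu> (map (poly_eval scale c N) (map ?T is))"
        using less.prems ml len by (intro poly_eval_cauchy_map[OF vs]) (auto simp: mult.commute)
      also have "\<dots> = \<mu> (map (\<lambda>i. Tmap \<mu> d i (poly_eval scale c N U)) is)"
      proof -
        have "poly_eval scale c N (?T i) = Tmap \<mu> d i (poly_eval scale c N U)" if "i \<in> set is" for i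
        proof (rule less.hyps)
          show "i < q" using lt[OF that] .
          then show "B * i * d \<le> N"
            using less.prems by (meson le_trans less_imp_le_nat mult_le_mono1 mult_le_mono2)
        qed
        then show ?thesis unfolding map_map by (intro arg_cong[where f = \<mu>] map_cong) auto
      qed
      finally show ?thesis .
    qed
    then show ?thesis
      by (simp add: Tmap_eq_sum_compositions[OF d 3] poly_eval_sum[OF vs])
  qed (simp_all add: poly_eval_def)
qed

lemma sum_Tmap_series_fixpoint:
  fixes scale :: "'k::field_char_0 \<Rightarrow> 'a::ab_group_add \<Rightarrow> 'a"
  assumes vs: "vector_space scale" and d: "2 \<le> d" and ml: "multilinear scale d \<mu>" and p: "0 < p"
    and nil: "\<And>x q. p \<le> q \<Longrightarrow> Tmap \<mu> d q x = 0" and U: "vanishes_above B U"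
  defines "W \<equiv> \<Sum>q<p. Tmap (cauchy_map \<mu>) d q U"
  shows "W = U + cauchy_map \<mu> (replicate d W)"
proof -
  define N where "N = d * (B * p)"
  have N: "B \<le> N" "B * p \<le> N" using p d by (simp_all add: N_def)
  have W_va: "vanishes_above (B * p) W"
    unfolding W_def using p
    by (intro vanishes_above_sum vanishes_above_mono[OF vanishes_above_Tmap[OF ml d U]]) simp
  have "vanishes_above N (cauchy_map \<mu> (replicate d W))"
    using vanishes_above_cauchy_map[of scale "replicate d W" \<mu> "\<lambda>_. B * p"] ml W_va
    by (simp add: N_def)
  then have "vanishes_above N (W - (U + cauchy_map \<mu> (replicate d W)))"
    using vanishes_above_mono[OF W_va N(2)] vanishes_above_mono[OF U N(1)]
    unfolding vanishes_above_def by simp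
  moreover have "poly_eval scale c N (W - (U + cauchy_map \<mu> (replicate d W))) = 0" for c
  proof -
    define u where "u = poly_eval scale c N U"
    have "poly_eval scale c N (Tmap (cauchy_map \<mu>) d q U) = Tmap \<mu> d q u" if "q < p" for q
      using that unfolding u_def N_def by (intro poly_eval_Tmap[OF vs ml d U]) (simp add: algebra_simps)
    then have "poly_eval scale c N W = (\<Sum>q<p. Tmap \<mu> d q u)"
      unfolding W_def poly_eval_sum[OF vs] by simp
    moreover have "poly_eval scale c N (cauchy_map \<mu> (replicate d W)) = \<mu> (replicate d (poly_eval scale c N W))"
      using poly_eval_cauchy_map[OF vs, where Ps = "replicate d W" and B = "B * p"] ml W_va
      by (simp add: N_def)
    ultimately show ?thesis
      using sum_Tmap_fixpoint[OF vs d ml p nil]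
      unfolding poly_eval_diff[OF vs] poly_eval_add[OF vs] u_def by simp
  qed
  ultimately have "W - (U + cauchy_map \<mu> (replicate d W)) = 0"
    by (rule poly_eq_0_if_roots[OF vs])
  then show ?thesis by simp
qed

section \<open>Degrees occurring in \<open>T\<^sub>q\<close> of a trinomial\<close>

lemma sum_lists_weighted_decomposition:
  fixes d M :: nat
  shows "length is = length js \<Longrightarrow>
    \<forall>k<length is. \<exists>a b c. a + b + c = is ! k \<and> js ! k = a + d * b + M * c \<Longrightarrow>
    \<exists>a b c. a + b + c = sum_list is \<and> sum_list js = a + d * b + M * c"
proof (induct "is" js rule: list_induct2)
  case (Cons i "is" j js)
  obtain a b c where "a + b + c = i" "j = a + d * b + M * c"
    using Cons.prems[rule_format, of 0] by auto
  moreover obtain a' b' c' where "a' + b' + c' = sum_list is" "sum_list js = a' + d * b' + M * c'"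
    using Cons.hyps(2) Cons.prems by fastforce
  ultimately show ?case
    by (intro exI[of _ "a + a'"] exI[of _ "b + b'"] exI[of _ "c + c'"]) (simp add: algebra_simps)
qed simp

lemma dvd_sum_list_minus_length:
  fixes e :: nat
  shows "\<forall>i\<in>set is. 1 \<le> i \<and> e dvd (i - 1) \<Longrightarrow> e dvd (sum_list is - length is) \<and> length is \<le> sum_list is"
proof (induct "is")
  case (Cons i "is")
  then have IH: "e dvd (sum_list is - length is)" "length is \<le> sum_list is" "1 \<le> i" "e dvd (i - 1)"
    by auto
  then have "sum_list (i # is) - length (i # is) = (i - 1) + (sum_list is - length is)"
    by simp
  moreover have "e dvd (i - 1) + (sum_list is - length is)" using dvd_add[OF IH(4) IH(1)] .
  ultimately have "e dvd sum_list (i # is) - length (i # is)" by (simp only:)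
  then show ?case using IH by simp
qed simp

lemma Tmap_support:
  assumes ml: "multilinear scale d \<mu>" and d: "2 \<le> d"
    and U: "\<And>n. U n \<noteq> 0 \<Longrightarrow> n = 1 \<or> n = d \<or> n = M"
  shows "Tmap (cauchy_map \<mu>) d q U n \<noteq> 0 \<Longrightarrow>
     1 \<le> q \<and> (d - 1) dvd (q - 1) \<and> (\<exists>a b c. a + b + c = q \<and> n = a + d * b + M * c)"
proof (induct q arbitrary: n rule: less_induct)
  case (less q)
  consider "q = 0" | "q = 1" | "2 \<le> q" by linarith
  then show ?case
  proof cases
    case 2
    then have "n = 1 \<or> n = d \<or> n = M" using U less.prems by simp
    then have "n = 1 + d * 0 + M * 0 \<or> n = 0 + d * 1 + M * 0 \<or> n = 0 + d * 0 + M * 1"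
      by simp
    moreover have "(1::nat) + 0 + 0 = 1" "(0::nat) + 1 + 0 = 1" "(0::nat) + 0 + 1 = 1" by simp_all
    ultimately have "\<exists>a b c. a + b + c = 1 \<and> n = a + d * b + M * c" by blast
    with 2 show ?thesis by simp
  next
    case 3
    let ?T = "\<lambda>i. Tmap (cauchy_map \<mu>) d i U"
    obtain "is" where "is": "is \<in> compositions d q" and nz: "cauchy_map \<mu> (map ?T is) n \<noteq> 0"
      using less.prems unfolding Tmap_eq_sum_compositions[OF d 3] sum_fun_apply
      by (meson sum.not_neutral_contains_not_neutral)
    have len: "length is = d" and sq: "sum_list is = q"
      using "is" by (auto simp: compositions_def weak_compositions_def)
    obtain js where js: "js \<in> weak_compositions d n" and "\<And>k. k < d \<Longrightarrow> ?T (is ! k) (js ! k) \<noteq> 0"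
      using cauchy_map_nonzero_imp[of scale "map ?T is" \<mu>] ml nz len by auto
    then have IH: "1 \<le> is ! k \<and> (d - 1) dvd (is ! k - 1) \<and>
        (\<exists>a b c. a + b + c = is ! k \<and> js ! k = a + d * b + M * c)" if "k < d" for k
      using that len compositions_member_less[OF "is" d] by (intro less.hyps) auto
    have decomp: "\<exists>a b c. a + b + c = q \<and> n = a + d * b + M * c"
      using sum_lists_weighted_decomposition[of "is" js d M] IH len js sq
      by (simp add: weak_compositions_def)
    have "\<forall>i\<in>set is. 1 \<le> i \<and> (d - 1) dvd (i - 1)"
      using IH len by (metis in_set_conv_nth)
    then have dv: "(d - 1) dvd (q - d)" "d \<le> q"
      using dvd_sum_list_minus_length[of "is" "d - 1"] len sq by auto
    then have "q - 1 = (q - d) + (d - 1)" using d by simp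
    then have "(d - 1) dvd (q - 1)" using dvd_add[OF dv(1) dvd_refl] by simp
    with decomp 3 show ?thesis by simp
  qed (use less.prems in simp)
qed

lemma sum_Tmap_support:
  assumes ml: "multilinear scale d \<mu>" and d: "2 \<le> d"
    and U: "\<And>n. U n \<noteq> 0 \<Longrightarrow> n = 1 \<or> n = d \<or> n = M"
    and nz: "(\<Sum>q<p. Tmap (cauchy_map \<mu>) d q U) n \<noteq> 0"
  shows "\<exists>q<p. 1 \<le> q \<and> (d - 1) dvd (q - 1) \<and> (\<exists>a b c. a + b + c = q \<and> n = a + d * b + M * c)"
proof -
  obtain q where "q \<in> {..<p}" "Tmap (cauchy_map \<mu>) d q U n \<noteq> 0"
    using nz unfolding sum_fun_apply by (rule sum.not_neutral_contains_not_neutral)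
  with Tmap_support[OF ml d U this(2)] show ?thesis by auto
qed

text \<open>Degree \<open>M + K (d - 1)\<close> would need exactly one factor of degree \<open>M\<close>, and the rest
\<open>a + d b = K (d - 1)\<close> exceeds \<open>d (q - 1) \<le> d (d - 1) \<lfloor>(p - 2) / (d - 1)\<rfloor>\<close>.\<close>

lemma engel_degree_not_attained:
  fixes a b c d p q M K :: nat
  assumes d: "2 \<le> d" and q: "1 \<le> q" "q < p" and dvd: "(d - 1) dvd (q - 1)"
    and abc: "a + b + c = q" and K: "K = d * ((p - 2) div (d - 1)) + 1"
    and M: "d * p < M" "K * (d - 1) < M"
  shows "M + K * (d - 1) \<noteq> a + d * b + M * c"
proof
  assume eq: "M + K * (d - 1) = a + d * b + M * c"
  have adb: "a + d * b \<le> d * (a + b)" using d by (simp add: algebra_simps)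
  consider "c = 0" | "c = 1" | "2 \<le> c" by linarith
  then show False
  proof cases
    case 1
    then have "a + d * b \<le> d * q" using adb abc by simp
    also have "\<dots> \<le> d * p" using q(2) by simp
    finally show False using eq 1 M(1) by simp
  next
    case 3
    then have "M * 2 \<le> M * c" by (rule mult_le_mono2)
    then show False using eq M(2) by linarith
  next
    case 2
    obtain t where t: "q - 1 = (d - 1) * t" using dvd by (auto elim: dvdE)
    have "(d - 1) * t \<le> p - 2" using t q by simp
    then have "((d - 1) * t) div (d - 1) \<le> (p - 2) div (d - 1)" by (rule div_le_mono)
    then have tm: "t \<le> (p - 2) div (d - 1)" using d by simp
    have "K * (d - 1) = a + d * b" using eq 2 by simp
    also have "\<dots> \<le> d * (q - 1)"
      using adb abc 2 by (metis add_diff_cancel_right' add.right_neutral)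
    also have "\<dots> \<le> d * ((d - 1) * ((p - 2) div (d - 1)))" using t tm by simp
    finally have "K * (d - 1) \<le> d * ((d - 1) * ((p - 2) div (d - 1)))" .
    moreover have "d * ((d - 1) * ((p - 2) div (d - 1))) < K * (d - 1)"
    proof -
      obtain e where "d = Suc e" "1 \<le> e" using d by (cases d) auto
      then show ?thesis unfolding K by (simp add: algebra_simps)
    qed
    ultimately show False by simp
  qed
qed

section \<open>Coefficients of the fixed point\<close>

lemma two_nth_le_sum_list:
  assumes "k1 < length js" "k2 < length js" "k1 \<noteq> k2"
  shows "js ! k1 + js ! k2 \<le> sum_list (js :: nat list)"
proof -
  have "js ! k1 + js ! k2 = (\<Sum>k\<in>{k1, k2}. js ! k)" using assms by simp
  also have "\<dots> \<le> (\<Sum>k\<in>{0..<length js}. js ! k)" by (rule sum_mono2) (use assms in auto)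
  finally show ?thesis by (simp add: sum_list_sum_nth)
qed

lemma weak_composition_gap_cases:
  assumes js: "js \<in> weak_compositions r n" and r: "2 \<le> r" and n: "n < 2 * M" and W0: "W 0 = 0"
    and gap: "\<And>j. 1 < j \<Longrightarrow> j < M \<Longrightarrow> j < n \<Longrightarrow> W j = 0"
    and nz: "\<And>k. k < r \<Longrightarrow> W (js ! k) \<noteq> 0"
  obtains "n = r" "js = replicate r 1"
    | k where "k < r" "M + r - 1 \<le> n" "js = (replicate r 1)[k := n - r + 1]"
proof -
  have len: "length js = r" and sum: "sum_list js = n"
    using js by (auto simp: weak_compositions_def)
  have pos: "0 \<notin> set js" using nz W0 len by (metis in_set_conv_nth)
  have small: "js ! k + (r - 1) \<le> n" if "k < r" for k
    using nth_plus_length_le_sum_list[OF pos, of k] that len sum by simp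
  have pos_nth: "0 < js ! k" if "k < r" for k using pos that len by (metis gr0I nth_mem)
  have entries: "js ! k = 1 \<or> M \<le> js ! k" if "k < r" for k
  proof -
    note pos_nth[OF that]
    moreover have "js ! k < n" using small[OF that] r by simp
    ultimately show ?thesis using gap[of "js ! k"] nz[OF that] by linarith
  qed
  show ?thesis
  proof (cases "\<exists>k<r. M \<le> js ! k")
    case False
    have "js ! k = 1" if "k < r" for k using entries[OF that] False that by auto
    then have "js = replicate r 1" using len by (intro nth_equalityI) auto
    moreover from this have "n = r" using sum by (simp add: sum_list_replicate)
    ultimately show ?thesis using that(1) by blast
  next
    case True
    then obtain k where k: "k < r" "M \<le> js ! k" by auto
    have "js ! k' = 1" if "k' < r" "k' \<noteq> k" for k'
    proof -
      have "js ! k + js ! k' \<le> n" using two_nth_le_sum_list[of k js k'] that k len sum by simp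
      then show ?thesis using entries[OF that(1)] k n by linarith
    qed
    then have js_eq: "js = (replicate r 1)[k := js ! k]"
      using k len by (intro nth_equalityI) (auto simp: nth_list_update)
    have "sum_list ((replicate r (1::nat))[k := js ! k]) = js ! k + (r - 1)"
      using k by (simp add: sum_list_update sum_list_replicate)
    then have "js ! k + (r - 1) = n" using arg_cong[OF js_eq, of sum_list] sum by simp
    then have "js ! k = n - r + 1" "M + r - 1 \<le> n" using k r pos_nth[OF k(1)] by auto
    with k(1) js_eq show ?thesis by (intro that(2)) auto
  qed
qed

lemma sum_image_update_replicate:
  assumes "e \<noteq> 1"
  shows "(\<Sum>js\<in>(\<lambda>k. (replicate r (1::nat))[k := e]) ` {..<r}. f js) =
    (\<Sum>k<r. f ((replicate r 1)[k := e]))"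
proof (rule sum.reindex_cong[OF _ refl refl], rule inj_onI)
  fix k1 k2 assume k: "k1 \<in> {..<r}" "k2 \<in> {..<r}"
    and eq: "(replicate r (1::nat))[k1 := e] = (replicate r 1)[k2 := e]"
  show "k1 = k2"
  proof (rule ccontr)
    assume "k1 \<noteq> k2"
    then have "((replicate r (1::nat))[k1 := e]) ! k1 \<noteq> ((replicate r 1)[k2 := e]) ! k1"
      using k assms by (simp add: nth_list_update)
    with eq show False by simp
  qed
qed

lemma cauchy_map_replicate_gap:
  assumes ml: "multilinear scale r g" and r: "2 \<le> r" and M: "2 \<le> M" and W0: "W 0 = 0"
    and gap: "\<And>j. 1 < j \<Longrightarrow> j < M \<Longrightarrow> j < n \<Longrightarrow> W j = 0" and n: "n < 2 * M"
  shows "cauchy_map g (replicate r W) n =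
    (if n = r then g (replicate r (W 1)) else 0) +
    (if M + r - 1 \<le> n then (\<Sum>k<r. g ((replicate r (W 1))[k := W (n - r + 1)])) else 0)"
proof -
  define e where "e = n - r + 1"
  define A where "A = (if n = r then {replicate r (1::nat)} else {})"
  define B where "B = (if M + r - 1 \<le> n then (\<lambda>k. (replicate r (1::nat))[k := e]) ` {..<r} else {})"
  have e: "M + r - 1 \<le> n \<Longrightarrow> e \<noteq> 1" using M by (simp add: e_def)
  have "A \<union> B \<subseteq> weak_compositions r n"
    using r M by (auto simp: A_def B_def e_def weak_compositions_def sum_list_update sum_list_replicate)
  moreover have "g (map W js) = 0" if "js \<in> weak_compositions r n - (A \<union> B)" for js
  proof (rule ccontr)
    assume "g (map W js) \<noteq> 0"
    moreover have "length js = r" using that by (simp add: weak_compositions_def)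
    ultimately have "W (js ! k) \<noteq> 0" if "k < r" for k
      using multilinear_eq_0[OF ml, of "map W js"] nth_mem[of k "map W js"] that by auto
    moreover have "js \<in> weak_compositions r n" using that by simp
    ultimately show False
      by (elim weak_composition_gap_cases[where W = W, OF _ r n W0 gap])
        (use that in \<open>auto simp: A_def B_def e_def\<close>)
  qed
  ultimately have "cauchy_map g (replicate r W) n = (\<Sum>js\<in>A \<union> B. g (map W js))"
    unfolding cauchy_map_replicate by (intro sum.mono_neutral_right finite_weak_compositions) auto
  also have "\<dots> = (\<Sum>js\<in>A. g (map W js)) + (\<Sum>js\<in>B. g (map W js))"
    using e M by (intro sum.union_disjoint) (auto simp: A_def B_def)
  finally show ?thesis
    using sum_image_update_replicate[where r = r and f = "\<lambda>js. g (map W js)", OF e]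
    by (simp add: A_def B_def e_def map_update)
qed

text \<open>The polynomial \<open>x t - \<mu>(x, \<dots>, x) t\<^sup>d + y t\<^sup>M\<close>: its \<open>t\<^sup>d\<close> term cancels the
contribution of \<open>x t\<close> to \<open>\<mu>(W, \<dots>, W)\<close>, so that the fixed point \<open>W\<close> is \<open>x t\<close> below degree \<open>M\<close>.\<close>

definition probe :: "('a list \<Rightarrow> 'a) \<Rightarrow> nat \<Rightarrow> nat \<Rightarrow> 'a \<Rightarrow> 'a \<Rightarrow> nat \<Rightarrow> 'a::ab_group_add" where
  "probe \<mu> d M x y n = (if n = 1 then x else if n = d then - \<mu> (replicate d x) else if n = M then y else 0)"

lemma fixpoint_coeff_below:
  assumes ml: "multilinear scale d \<mu>" and d: "2 \<le> d" "d < M" and W0: "W 0 = 0"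
    and W: "W = probe \<mu> d M x y + cauchy_map \<mu> (replicate d W)"
  shows "n < M \<Longrightarrow> W n = (if n = 1 then x else 0)"
proof (induct n rule: less_induct)
  case (less n)
  have "cauchy_map \<mu> (replicate d W) n = (if n = d then \<mu> (replicate d (W 1)) else 0)"
    using cauchy_map_replicate_gap[where M = M and n = n and W = W, OF ml d(1) _ W0] less d by auto
  moreover have "W 1 = x" if "n = d" using less.hyps[of 1] that d less.prems by simp
  ultimately show ?case using fun_cong[OF W, of n] less.prems d W0 by (auto simp: probe_def)
qed

lemma fixpoint_coeff_ad_power:
  assumes vs: "vector_space scale" and sm: "symmetric_multilinear scale d \<mu>"
    and d: "2 \<le> d" "d < M" and W0: "W 0 = 0"
    and W: "W = probe \<mu> d M x y + cauchy_map \<mu> (replicate d W)"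
    and i: "i * (d - 1) < M"
  shows "W (M + i * (d - 1)) = scale (of_nat d ^ i) ((ad \<mu> d x ^^ i) y)"
proof -
  interpret vector_space scale by (rule vs)
  have ml: "multilinear scale d \<mu>" by (rule multilinear_if_symmetric_multilinear[OF sm])
  have below: "W n = (if n = 1 then x else 0)" if "n < M" for n
    using fixpoint_coeff_below[OF ml d W0 W that] .
  have above: "W n = (if n = M then y else 0) +
      (if M + d - 1 \<le> n then scale (of_nat d) (ad \<mu> d x (W (n - d + 1))) else 0)"
    if "M \<le> n" "n < 2 * M" for n
  proof -
    have "cauchy_map \<mu> (replicate d W) n =
        (if M + d - 1 \<le> n then (\<Sum>k<d. \<mu> ((replicate d x)[k := W (n - d + 1)])) else 0)"
      using cauchy_map_replicate_gap[where M = M and n = n and W = W, OF ml d(1) _ W0]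
        below[of 1] below that d
      by auto
    also have "\<dots> = (if M + d - 1 \<le> n then scale (of_nat d) (ad \<mu> d x (W (n - d + 1))) else 0)"
      by (simp add: symmetric_multilinear_update_replicate[OF sm] sum_constant_scale)
    finally show ?thesis using fun_cong[OF W, of n] that d by (simp add: probe_def)
  qed
  show ?thesis
    using i
  proof (induct i)
    case 0
    have "\<not> M + d - 1 \<le> M" using d by linarith
    then show ?case using above[of M] d by simp
  next
    case (Suc i)
    let ?n = "M + Suc i * (d - 1)"
    obtain j where j: "j = i * (d - 1)" by simp
    have "?n = M + (d - 1) + j" "(d - 1) + j < M" using Suc.prems j by simp_all
    then have n: "M \<le> ?n" "?n < 2 * M" "?n \<noteq> M" "M + d - 1 \<le> ?n" "?n - d + 1 = M + j"
      using d by linarith+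
    have "W ?n = scale (of_nat d) (ad \<mu> d x (W (M + i * (d - 1))))"
      unfolding above[OF n(1,2)] if_not_P[OF n(3)] if_P[OF n(4)] n(5) j by simp
    also have "\<dots> = scale (of_nat d ^ Suc i) ((ad \<mu> d x ^^ Suc i) y)"
      using Suc ad_scale[OF sm] d by simp
    finally show ?case .
  qed
qed

section \<open>The Engel bound\<close>

lemma ad_power_eq_0_if_nilindex:
  fixes scale :: "'k::field_char_0 \<Rightarrow> 'a::ab_group_add \<Rightarrow> 'a"
  assumes vs: "vector_space scale" and sm: "symmetric_multilinear scale d \<mu>" and d: "2 \<le> d"
    and p: "2 \<le> p" and nil: "\<And>x q. p \<le> q \<Longrightarrow> Tmap \<mu> d q x = 0"
  shows "(ad \<mu> d x ^^ (d * ((p - 2) div (d - 1)) + 1)) y = 0"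
proof -
  interpret vector_space scale by (rule vs)
  have ml: "multilinear scale d \<mu>" by (rule multilinear_if_symmetric_multilinear[OF sm])
  define K where "K = d * ((p - 2) div (d - 1)) + 1"
  define M where "M = d * p + K * (d - 1) + d"
  have M: "d < M" "d * p < M" "K * (d - 1) < M" using d p by (auto simp: M_def)
  define W where "W = (\<Sum>q<p. Tmap (cauchy_map \<mu>) d q (probe \<mu> d M x y))"
  have W_nz: "\<exists>q<p. 1 \<le> q \<and> (d - 1) dvd (q - 1) \<and> (\<exists>a b c. a + b + c = q \<and> n = a + d * b + M * c)"
    if "W n \<noteq> 0" for n
    by (rule sum_Tmap_support[OF ml d _ that[unfolded W_def]]) (simp add: probe_def split: if_splits)
  have W0: "W 0 = 0"
  proof (rule ccontr)
    assume "W 0 \<noteq> 0"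
    from W_nz[OF this] obtain q a b c where "1 \<le> q" "a + b + c = q" "0 = a + d * b + M * c"
      by blast
    then show False using d M by simp
  qed
  have "vanishes_above M (probe \<mu> d M x y)" using M by (simp add: vanishes_above_def probe_def)
  then have W: "W = probe \<mu> d M x y + cauchy_map \<mu> (replicate d W)"
    unfolding W_def using p by (intro sum_Tmap_series_fixpoint[OF vs d ml _ nil]) simp_all
  have "W (M + K * (d - 1)) = 0"
  proof (rule ccontr)
    assume "W (M + K * (d - 1)) \<noteq> 0"
    from W_nz[OF this] obtain q a b c where q: "1 \<le> q" "q < p" "(d - 1) dvd (q - 1)" "a + b + c = q"
      and deg: "M + K * (d - 1) = a + d * b + M * c"
      by blast
    with engel_degree_not_attained[OF d q K_def M(2,3)] show False by simp
  qed
  moreover have "W (M + K * (d - 1)) = scale (of_nat d ^ K) ((ad \<mu> d x ^^ K) y)"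
    by (rule fixpoint_coeff_ad_power[OF vs sm d M(1) W0 W M(3)])
  ultimately show ?thesis using d by (simp add: K_def)
qed

lemma nat_floor_engel_index:
  assumes "2 \<le> d" "2 \<le> p"
  shows "nat (int d * \<lfloor>(real p - 2) / (real d - 1)\<rfloor> + 1) = d * ((p - 2) div (d - 1)) + 1"
proof -
  have "(real p - 2) / (real d - 1) = real (p - 2) / real (d - 1)"
    using assms by (simp add: of_nat_diff)
  then have "\<lfloor>(real p - 2) / (real d - 1)\<rfloor> = int ((p - 2) div (d - 1))"
    by (simp add: floor_divide_of_nat_eq)
  then show ?thesis by (simp add: nat_add_distrib nat_mult_distrib)
qed

lemma n_engel_if_yagzhev_nil_of_nilindex:
  fixes scale :: "'k::field_char_0 \<Rightarrow> 'a::ab_group_add \<Rightarrow> 'a"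
  assumes vs: "vector_space scale" and d: "2 \<le> d" and sm: "symmetric_multilinear scale d \<mu>"
    and "yagzhev_nil_of_nilindex \<mu> d p"
  shows "n_engel \<mu> d (nat (int d * \<lfloor>(real p - 2) / (real d - 1)\<rfloor> + 1))"
proof -
  have "0 < p" and nil: "\<And>x q. p \<le> q \<Longrightarrow> Tmap \<mu> d q x = 0"
    using assms(4) unfolding yagzhev_nil_of_nilindex_def by auto
  show ?thesis
  proof (cases "p = 1")
    case True
    then have "z = 0" for z :: 'a using nil[of 1 z] by simp
    then show ?thesis unfolding n_engel_def by blast
  next
    case False
    with \<open>0 < p\<close> have p: "2 \<le> p" by simp
    show ?thesis
      unfolding n_engel_def nat_floor_engel_index[OF d p]
      using ad_power_eq_0_if_nilindex[OF vs sm d p nil] by blast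
  qed
qed

theorem mainTheorem1:
  fixes scale :: "'k::field_char_0 \<Rightarrow> 'a::ab_group_add \<Rightarrow> 'a"
    and \<mu> :: "'a list \<Rightarrow> 'a" and d :: nat
  assumes "vector_space scale"
    and "d \<ge> 2"
    and "symmetric_multilinear scale d \<mu>"
  shows "(yagzhev_nil \<mu> d \<longrightarrow> engel \<mu> d) \<and>
         (\<forall>p. yagzhev_nil_of_nilindex \<mu> d p \<longrightarrow>
              n_engel \<mu> d (nat (int d * \<lfloor>(real p - 2) / (real d - 1)\<rfloor> + 1)))"
proof -
  have n_engel: "n_engel \<mu> d (nat (int d * \<lfloor>(real p - 2) / (real d - 1)\<rfloor> + 1))"
    if "yagzhev_nil_of_nilindex \<mu> d p" for p
    using n_engel_if_yagzhev_nil_of_nilindex[OF assms that] .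
  then have "yagzhev_nil \<mu> d \<Longrightarrow> engel \<mu> d"
    unfolding yagzhev_nil_def engel_def by (blast intro: n_engel_Suc)
  with n_engel show ?thesis by blast
qed

end
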